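(* Let $\lambda_1,\dots,\lambda_n>0$ and $\Lambda=\big(\lambda_i\lambda_j+(\lambda_i\lambda_j)^{-1}\big)_{i,j=1}^n$. Then $I(sp,\Lambda)=\min\{M_1,M_2\}$, where $M_1=\min_i(\lambda_i^2+\lambda_i^{-2})$ and $$M_2=\inf\Big\{\frac{(\lambda_i+\lambda_j)^2}{1+\lambda_i^2\lambda_j^2}: \lambda_i<1<\lambda_j,\ \lambda_i^2\le\frac{1}{\lambda_i\lambda_j}\le\lambda_j^2\Big\}$$ (with $\inf\emptyset=+\infty$). In particular, if all $\lambda_i\ge1$ or all $\lambda_i\le1$, then $I(sp,\Lambda)=M_1$.
   Context: $\circ$ is the Hadamard product; $I(sp,C)=\min\{\|C\circ B\|: B \text{ positive semidefinite } n\times n,\ \|B\|=1\}$ with $\|\cdot\|$ the spectral norm. *)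

theory Defs
  imports "HOL-Analysis.Analysis"
begin

definition hadamard :: "complex^'n^'n \<Rightarrow> complex^'n^'n \<Rightarrow> complex^'n^'n" where
  "hadamard A B = (\<chi> i j. A$i$j * B$i$j)"

definition spec_norm :: "complex^'n^'n \<Rightarrow> real" where
  "spec_norm A = onorm (\<lambda>x. A *v x)"

definition psd :: "complex^'n^'n \<Rightarrow> bool" where
  "psd B \<longleftrightarrow> (\<forall>i j. B$i$j = cnj (B$j$i)) \<and>
              (\<forall>x::complex^'n. 0 \<le> Re (\<Sum>i\<in>UNIV. cnj (x$i) * (B *v x)$i))"

definition I_sp :: "complex^'n^'n \<Rightarrow> real" where
  "I_sp C = Inf {spec_norm (hadamard C B) | B. psd B \<and> spec_norm B = 1}"

end

theory Submission
  imports Defs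
begin

text \<open>
Write o for the Hadamard product. Since Lam = lam lam^T + lam^-1 (lam^-1)^T, for every B the
quadratic form of Lam o B splits as <D y, B D y> + <D^-1 y, B D^-1 y> with D = diag lam. For a
probability vector t put P_t = \<Sum> t_i lam_i^2, Q_t = \<Sum> t_i / lam_i^2, and let top_eig P_t Q_t be the
larger eigenvalue of [[P_t, 1], [1, Q_t]].

If B is psd with norm 1, pick a unit z with |B z| = 1 and put w = B z; then Re <w, x>^2 \<le> <x, B x>,
and testing Lam o B on the vectors (c lam + d / lam) o w gives |Lam o B| \<ge> top_eig P_t Q_t for
t = |w|^2. Conversely, for B = w w^T the product Lam o B = p p^T + q q^T with p = lam o w and
q = w / lam has norm top_eig P_t Q_t for t = w^2, the top eigenvalue of the Gram matrix of p, q.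
Hence I(sp, Lam) = min_t top_eig P_t Q_t.

The point (P_t, Q_t) lies above the chord of the convex curve Q = 1/P joining the two values
lam_j^2 \<le> P_t \<le> lam_k^2 adjacent to P_t. Evaluating the quadratic form of [[P_t, 1], [1, Q_t]] at a
suitable vector (c, d) then bounds top_eig P_t Q_t from below either by an endpoint value
lam^2 + lam^-2 or, exactly when the constraints defining M2 hold, by the value
(lam_i + lam_j)^2 / (1 + lam_i^2 lam_j^2); weights t supported on one or two indices attain these
bounds.
\<close>

section \<open>Spectral norm and positive semidefinite matrices\<close>

lemma inner_vec_complex: "inner (x::complex^'n) y = Re (\<Sum>i\<in>UNIV. cnj (x$i) * y$i)"
  by (simp add: inner_vec_def inner_complex_def)

lemma norm_vec_complex_sq: "(norm (u::complex^'n))^2 = (\<Sum>i\<in>UNIV. (cmod (u$i))^2)"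
  by (simp add: norm_vec_def L2_set_def sum_nonneg)

lemma norm_le_if_norm_sq_le_inner:
  fixes x y :: "'a::real_inner"
  assumes "0 \<le> s" and "(norm y)^2 \<le> s * inner x y"
  shows "norm y \<le> s * norm x"
proof (cases "y = 0")
  case False
  have "norm y * norm y \<le> (s * norm x) * norm y"
    using assms order_trans[OF _ mult_left_mono[OF norm_cauchy_schwarz]]
    by (simp add: power2_eq_square mult.assoc)
  then show ?thesis using False by simp
qed (use assms in simp)

lemma inner_le_if_norm_sq_le_inner:
  fixes x y :: "'a::real_inner"
  assumes "0 \<le> s" and "(norm y)^2 \<le> s * inner x y"
  shows "inner x y \<le> s * (norm x)^2"
proof -
  have "inner x y \<le> norm x * norm y" by (rule norm_cauchy_schwarz)
  also have "\<dots> \<le> norm x * (s * norm x)"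
    by (intro mult_left_mono norm_le_if_norm_sq_le_inner assms) simp
  finally show ?thesis by (simp add: power2_eq_square ac_simps)
qed

lemma matrix_vector_mult_scaleR_complex: "(A::complex^'n^'m) *v (c *\<^sub>R x) = c *\<^sub>R (A *v x)"
  by (rule linear_scale[OF bounded_linear.linear[OF matrix_vector_mul_bounded_linear]])

lemma norm_mult_vec_le_spec_norm: "norm (A *v x) \<le> spec_norm A * norm x"
  unfolding spec_norm_def by (rule onorm) simp

lemma spec_norm_nonneg: "0 \<le> spec_norm A"
  unfolding spec_norm_def by (rule onorm_pos_le) simp

lemma spec_norm_le: "(\<And>x. norm (A *v x) \<le> b * norm x) \<Longrightarrow> spec_norm A \<le> b"
  unfolding spec_norm_def by (rule onorm_le)

lemma spec_norm_attained:
  fixes A :: "complex^'n^'n"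
  obtains z where "norm z = 1" and "norm (A *v z) = spec_norm A"
proof -
  have "continuous_on (sphere 0 1) (\<lambda>x. norm (A *v x))"
    by (intro continuous_intros)
  then obtain z where z: "z \<in> sphere (0::complex^'n) 1"
    and z_max: "\<And>y. y \<in> sphere 0 1 \<Longrightarrow> norm (A *v y) \<le> norm (A *v z)"
    using continuous_attains_sup[of "sphere (0::complex^'n) 1" "\<lambda>x. norm (A *v x)"] by auto
  have "spec_norm A \<le> norm (A *v z)"
  proof (rule spec_norm_le)
    fix x :: "complex^'n"
    show "norm (A *v x) \<le> norm (A *v z) * norm x"
    proof (cases "x = 0")
      case False
      have "norm (A *v (inverse (norm x) *\<^sub>R x)) \<le> norm (A *v z)"
        using False by (intro z_max) simp
      then have "inverse (norm x) * norm (A *v x) \<le> norm (A *v z)"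
        by (simp add: matrix_vector_mult_scaleR_complex)
      then show ?thesis
        using False by (simp add: field_simps)
    qed simp
  qed
  moreover have "norm (A *v z) \<le> spec_norm A"
    using norm_mult_vec_le_spec_norm[of A z] z by simp
  ultimately show thesis using that z by simp
qed

lemma psd_inner_nonneg: "psd B \<Longrightarrow> 0 \<le> inner x (B *v x)"
  by (simp add: psd_def inner_vec_complex)

lemma psd_inner_commute:
  assumes "psd B"
  shows "inner x (B *v y) = inner (B *v x) y"
proof -
  have herm: "B$i$j = cnj (B$j$i)" for i j
    using assms unfolding psd_def by blast
  have "(\<Sum>i\<in>UNIV. cnj (x$i) * (B *v y)$i) = (\<Sum>i\<in>UNIV. \<Sum>j\<in>UNIV. cnj (x$i) * B$i$j * y$j)"
    by (simp add: matrix_vector_mult_def sum_distrib_left mult.assoc)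
  also have "\<dots> = (\<Sum>j\<in>UNIV. \<Sum>i\<in>UNIV. cnj (x$i) * B$i$j * y$j)"
    by (rule sum.swap)
  also have "\<dots> = (\<Sum>j\<in>UNIV. cnj ((B *v x)$j) * y$j)"
  proof (rule sum.cong[OF refl])
    fix j
    have "cnj ((B *v x)$j) = (\<Sum>i\<in>UNIV. B$i$j * cnj (x$i))"
      by (simp add: matrix_vector_mult_def cnj_sum herm[of _ j])
    then show "(\<Sum>i\<in>UNIV. cnj (x$i) * B$i$j * y$j) = cnj ((B *v x)$j) * y$j"
      by (simp add: sum_distrib_right) (simp add: ac_simps)
  qed
  finally show ?thesis
    by (simp only: inner_vec_complex)
qed

text \<open>Cauchy-Schwarz for the semi-inner product (x, y) \<mapsto> inner x (B *v y).\<close>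
lemma psd_inner_sq_le:
  assumes "psd B" and "inner z (B *v z) \<le> 1"
  shows "(inner (B *v z) x)^2 \<le> inner x (B *v x)"
proof -
  define t where "t = inner (B *v z) x"
  have "inner z (B *v x) = t"
    unfolding t_def using psd_inner_commute[OF assms(1)] by simp
  then have "inner (x - t *\<^sub>R z) (B *v (x - t *\<^sub>R z))
      = inner x (B *v x) - 2 * t * t + t * t * inner z (B *v z)"
    by (simp add: matrix_vector_mult_diff_distrib matrix_vector_mult_scaleR_complex
        inner_diff_left inner_diff_right inner_commute[of x] t_def algebra_simps)
  also have "\<dots> \<le> inner x (B *v x) - t * t"
    using mult_left_mono[OF assms(2), of "t * t"] by simp
  finally show ?thesis
    using psd_inner_nonneg[OF assms(1), of "x - t *\<^sub>R z"] by (simp add: t_def power2_eq_square)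
qed

definition diag_mult :: "('n::finite \<Rightarrow> real) \<Rightarrow> complex^'n \<Rightarrow> complex^'n" where
  "diag_mult f x = (\<chi> i. complex_of_real (f i) * x$i)"

lemma diag_mult_diag_mult: "diag_mult f (diag_mult g x) = diag_mult (\<lambda>i. f i * g i) x"
  by (simp add: diag_mult_def vec_eq_iff)

lemma diag_mult_one: "diag_mult (\<lambda>i. 1) x = x"
  by (simp add: diag_mult_def vec_eq_iff)

lemma inner_diag_mult:
  "inner (diag_mult f x) (diag_mult g x) = (\<Sum>i\<in>UNIV. f i * g i * (cmod (x$i))^2)"
proof -
  have "Re (cnj (complex_of_real (f i) * x$i) * (complex_of_real (g i) * x$i))
      = f i * g i * (cmod (x$i))^2" for i
    by (simp add: cmod_power2) (simp add: algebra_simps power2_eq_square)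
  then show ?thesis
    by (simp add: inner_vec_complex diag_mult_def)
qed

lemma inner_hadamard_rank_two:
  fixes B :: "complex^'n::finite^'n"
  shows "inner y (hadamard (\<chi> i j. complex_of_real (u i * u j + v i * v j)) B *v y)
     = inner (diag_mult u y) (B *v diag_mult u y) + inner (diag_mult v y) (B *v diag_mult v y)"
proof -
  have "(\<Sum>i\<in>UNIV. cnj (y$i) * (hadamard (\<chi> i j. complex_of_real (u i * u j + v i * v j)) B *v y)$i)
    = (\<Sum>i\<in>UNIV. cnj (diag_mult u y$i) * (B *v diag_mult u y)$i)
      + (\<Sum>i\<in>UNIV. cnj (diag_mult v y$i) * (B *v diag_mult v y)$i)"
    by (simp add: hadamard_def matrix_vector_mult_def diag_mult_def sum_distrib_left
        sum.distrib[symmetric] algebra_simps)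
  then show ?thesis
    by (simp add: inner_vec_complex)
qed

lemma spec_norm_rank_two_le:
  fixes p q :: "'n::finite \<Rightarrow> real"
  assumes V: "\<And>s r. (\<Sum>i\<in>UNIV. (s * p i + r * q i)^2) \<le> V * (s^2 + r^2)"
  shows "spec_norm ((\<chi> i j. complex_of_real (p i * p j + q i * q j)) :: complex^'n^'n) \<le> V"
proof (rule spec_norm_le)
  fix x :: "complex^'n"
  define \<alpha> where "\<alpha> = (\<Sum>j\<in>UNIV. complex_of_real (p j) * x$j)"
  define \<beta> where "\<beta> = (\<Sum>j\<in>UNIV. complex_of_real (q j) * x$j)"
  let ?A = "(\<chi> i j. complex_of_real (p i * p j + q i * q j)) :: complex^'n^'n"
  have V_nonneg: "0 \<le> V"
    using V[of 1 0] sum_nonneg[of UNIV "\<lambda>i. (p i)^2"] by simp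
  have Ax: "?A *v x = (\<chi> i. complex_of_real (p i) * \<alpha> + complex_of_real (q i) * \<beta>)"
    by (simp add: \<alpha>_def \<beta>_def vec_eq_iff matrix_vector_mult_def sum_distrib_left
        distrib_left sum.distrib ac_simps)
  have "(\<Sum>i\<in>UNIV. cnj (x$i) * (?A *v x)$i)
      = (\<Sum>i\<in>UNIV. complex_of_real (p i) * cnj (x$i)) * \<alpha>
        + (\<Sum>i\<in>UNIV. complex_of_real (q i) * cnj (x$i)) * \<beta>"
    unfolding Ax by (simp add: distrib_left sum.distrib sum_distrib_right ac_simps)
      (simp add: sum_distrib_left)
  then have "inner x (?A *v x) = Re (cnj \<alpha> * \<alpha> + cnj \<beta> * \<beta>)"
    by (simp add: inner_vec_complex \<alpha>_def \<beta>_def cnj_sum)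
  also have "\<dots> = (Re \<alpha>)^2 + (Re \<beta>)^2 + ((Im \<alpha>)^2 + (Im \<beta>)^2)"
    by (simp add: power2_eq_square)
  finally have inner_Ax: "inner x (?A *v x) = \<dots>" .
  have "(norm (?A *v x))^2
      = (\<Sum>i\<in>UNIV. (Re \<alpha> * p i + Re \<beta> * q i)^2) + (\<Sum>i\<in>UNIV. (Im \<alpha> * p i + Im \<beta> * q i)^2)"
    unfolding norm_vec_complex_sq Ax by (simp add: cmod_power2 sum.distrib ac_simps)
  also have "\<dots> \<le> V * ((Re \<alpha>)^2 + (Re \<beta>)^2) + V * ((Im \<alpha>)^2 + (Im \<beta>)^2)"
    by (intro add_mono V)
  also have "\<dots> = V * inner x (?A *v x)"
    unfolding inner_Ax by (simp add: distrib_left)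
  finally show "norm (?A *v x) \<le> V * norm x"
    by (rule norm_le_if_norm_sq_le_inner[OF V_nonneg])
qed

definition rank_one :: "('n::finite \<Rightarrow> real) \<Rightarrow> complex^'n^'n" where
  "rank_one w = (\<chi> i j. complex_of_real (w i * w j))"

lemma psd_rank_one: "psd (rank_one (w :: 'n::finite \<Rightarrow> real))"
  unfolding psd_def
proof (intro conjI allI)
  fix x :: "complex^'n"
  define s where "s = (\<Sum>j\<in>UNIV. complex_of_real (w j) * x$j)"
  have "(\<Sum>i\<in>UNIV. cnj (x$i) * (rank_one w *v x)$i) = cnj s * s"
    by (simp add: rank_one_def s_def matrix_vector_mult_def sum_distrib_left
        sum_distrib_right cnj_sum ac_simps)
  then show "0 \<le> Re (\<Sum>i\<in>UNIV. cnj (x$i) * (rank_one w *v x)$i)"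
    by simp
qed (simp add: rank_one_def mult.commute)

lemma spec_norm_rank_one:
  fixes w :: "'n::finite \<Rightarrow> real"
  assumes w: "(\<Sum>i\<in>UNIV. (w i)^2) = 1"
  shows "spec_norm (rank_one w) = 1"
proof (rule antisym)
  have "spec_norm ((\<chi> i j. complex_of_real (w i * w j + 0 * 0)) :: complex^'n^'n) \<le> 1"
    by (rule spec_norm_rank_two_le) (simp add: power_mult_distrib sum_distrib_left[symmetric] w)
  then show "spec_norm (rank_one w) \<le> 1"
    by (simp add: rank_one_def)
next
  define v where "v = ((\<chi> i. complex_of_real (w i)) :: complex^'n)"
  have v: "norm v = 1"
    using w by (simp add: norm_vec_def L2_set_def v_def)
  have "rank_one w *v v = (\<chi> i. complex_of_real (w i * (\<Sum>j\<in>UNIV. (w j)^2)))"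
    by (simp add: rank_one_def v_def vec_eq_iff matrix_vector_mult_def
        sum_distrib_left power2_eq_square ac_simps)
  then have "rank_one w *v v = v"
    using w by (simp add: v_def)
  then show "1 \<le> spec_norm (rank_one w)"
    using norm_mult_vec_le_spec_norm[of "rank_one w" v] v by simp
qed

section \<open>The top eigenvalue of [[P, 1], [1, Q]]\<close>

definition top_eig :: "real \<Rightarrow> real \<Rightarrow> real" where
  "top_eig P Q = (P + Q + sqrt ((P - Q)^2 + 4)) / 2"

lemma top_eig_ge: "P \<le> top_eig P Q \<and> Q \<le> top_eig P Q"
proof -
  have "\<bar>P - Q\<bar> \<le> sqrt ((P - Q)^2 + 4)"
    by (rule real_le_rsqrt) simp
  then show ?thesis
    unfolding top_eig_def abs_le_iff by (auto simp: field_simps)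
qed

lemma top_eig_eigen_eq: "(top_eig P Q - P) * (top_eig P Q - Q) = 1"
proof -
  have "(sqrt ((P - Q)^2 + 4))^2 = (P - Q)^2 + 4"
    by simp
  then show ?thesis
    by (simp add: top_eig_def field_simps power2_eq_square)
qed

lemma top_eig_le_iff: "top_eig P Q \<le> V \<longleftrightarrow> P \<le> V \<and> Q \<le> V \<and> 1 \<le> (V - P) * (V - Q)"
proof
  assume "top_eig P Q \<le> V"
  moreover have "1 \<le> (V - P) * (V - Q)" if "top_eig P Q \<le> V"
    unfolding top_eig_eigen_eq[of P Q, symmetric]
    using that top_eig_ge[of P Q] by (intro mult_mono) auto
  ultimately show "P \<le> V \<and> Q \<le> V \<and> 1 \<le> (V - P) * (V - Q)"
    using top_eig_ge[of P Q] by auto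
next
  assume V: "P \<le> V \<and> Q \<le> V \<and> 1 \<le> (V - P) * (V - Q)"
  show "top_eig P Q \<le> V"
  proof (rule ccontr)
    assume "\<not> top_eig P Q \<le> V"
    then have "(V - P) * (V - Q) < (top_eig P Q - P) * (top_eig P Q - Q)"
      using V by (intro mult_strict_mono) auto
    then show False
      using V by (simp add: top_eig_eigen_eq)
  qed
qed

lemma quadratic_form_le_top_eig: "c^2*P + 2*c*d + d^2*Q \<le> top_eig P Q * (c^2 + d^2)"
proof -
  define e where "e = top_eig P Q - P"
  define f where "f = top_eig P Q - Q"
  have ef: "e * f = 1"
    unfolding e_def f_def by (rule top_eig_eigen_eq)
  then have "e > 0"
    using top_eig_ge[of P Q] by (auto simp: e_def less_eq_real_def)
  moreover have "e * (e*c^2 - 2*c*d + f*d^2) = (e*c - d)^2"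
    using ef by (simp add: power2_eq_square algebra_simps)
  ultimately have "0 \<le> e*c^2 - 2*c*d + f*d^2"
    by (metis zero_le_power2 zero_le_mult_iff not_less)
  then show ?thesis
    by (simp add: e_def f_def algebra_simps)
qed

lemma top_eig_le_if_quadratic_form_le:
  assumes "\<And>c d. c^2*P + 2*c*d + d^2*Q \<le> V * (c^2 + d^2)"
  shows "top_eig P Q \<le> V"
proof -
  define d where "d = top_eig P Q - P"
  have "1^2*P + 2*1*d + d^2*Q - top_eig P Q * (1^2 + d^2)
      = - d * ((top_eig P Q - P) * (top_eig P Q - Q) - 1)"
    by (simp add: d_def power2_eq_square algebra_simps)
  then have "1^2*P + 2*1*d + d^2*Q = top_eig P Q * (1^2 + d^2)"
    by (simp add: top_eig_eigen_eq)
  then have "top_eig P Q * (1 + d^2) \<le> V * (1 + d^2)"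
    using assms[of 1 d] by simp
  then show ?thesis
    by (simp add: add_pos_nonneg)
qed

section \<open>Reduction to a two-dimensional problem\<close>

definition lam_matrix :: "('n::finite \<Rightarrow> real) \<Rightarrow> complex^'n^'n" where
  "lam_matrix lam = (\<chi> i j. complex_of_real (lam i * lam j + 1 / (lam i * lam j)))"

definition prob_vectors :: "('n::finite \<Rightarrow> real) set" where
  "prob_vectors = {t. (\<forall>i. 0 \<le> t i) \<and> (\<Sum>i\<in>UNIV. t i) = 1}"

definition gram_eig :: "('n::finite \<Rightarrow> real) \<Rightarrow> ('n \<Rightarrow> real) \<Rightarrow> real" where
  "gram_eig lam t = top_eig (\<Sum>i\<in>UNIV. t i * lam i^2) (\<Sum>i\<in>UNIV. t i / lam i^2)"

lemma sum_moments:
  fixes lam t :: "'n::finite \<Rightarrow> real"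
  assumes lam: "\<And>i. lam i \<noteq> 0" and t: "(\<Sum>i\<in>UNIV. t i) = 1"
  defines "P \<equiv> \<Sum>i\<in>UNIV. t i * lam i^2" and "Q \<equiv> \<Sum>i\<in>UNIV. t i / lam i^2"
  shows "(\<Sum>i\<in>UNIV. (c * lam i + d / lam i) * (c * lam i + d / lam i) * t i) = c^2*P + 2*c*d + d^2*Q"
    and "(\<Sum>i\<in>UNIV. lam i * (c * lam i + d / lam i) * t i) = c*P + d"
    and "(\<Sum>i\<in>UNIV. 1 / lam i * (c * lam i + d / lam i) * t i) = c + d*Q"
proof -
  have "(\<Sum>i\<in>UNIV. (c * lam i + d / lam i) * (c * lam i + d / lam i) * t i)
      = (\<Sum>i\<in>UNIV. c^2 * (t i * lam i^2) + 2*c*d * t i + d^2 * (t i / lam i^2))"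
    by (rule sum.cong) (simp_all add: field_simps lam power2_eq_square)
  then show "(\<Sum>i\<in>UNIV. (c * lam i + d / lam i) * (c * lam i + d / lam i) * t i)
      = c^2*P + 2*c*d + d^2*Q"
    by (simp only: sum.distrib flip: sum_distrib_left) (simp add: P_def Q_def t)
  have "(\<Sum>i\<in>UNIV. lam i * (c * lam i + d / lam i) * t i) = (\<Sum>i\<in>UNIV. c * (t i * lam i^2) + d * t i)"
    by (rule sum.cong) (simp_all add: field_simps lam power2_eq_square)
  then show "(\<Sum>i\<in>UNIV. lam i * (c * lam i + d / lam i) * t i) = c*P + d"
    by (simp only: sum.distrib flip: sum_distrib_left) (simp add: P_def t)
  have "(\<Sum>i\<in>UNIV. 1 / lam i * (c * lam i + d / lam i) * t i) = (\<Sum>i\<in>UNIV. c * t i + d * (t i / lam i^2))"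
    by (rule sum.cong) (simp_all add: field_simps lam power2_eq_square)
  then show "(\<Sum>i\<in>UNIV. 1 / lam i * (c * lam i + d / lam i) * t i) = c + d*Q"
    by (simp only: sum.distrib flip: sum_distrib_left) (simp add: Q_def t)
qed

lemma gram_eig_nonneg:
  assumes "t \<in> prob_vectors"
  shows "0 \<le> gram_eig lam t"
proof -
  have "0 \<le> (\<Sum>i\<in>UNIV. t i * lam i^2)"
    using assms by (intro sum_nonneg) (simp add: prob_vectors_def)
  then show ?thesis
    unfolding gram_eig_def using top_eig_ge order_trans by blast
qed

lemma lam_matrix_rank_two:
  "lam_matrix lam = (\<chi> i j. complex_of_real (lam i * lam j + (1 / lam i) * (1 / lam j)))"
  by (simp add: lam_matrix_def)

lemma quadratic_form_le_spec_norm_hadamard: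
  fixes lam :: "'n::finite \<Rightarrow> real" and B :: "complex^'n^'n" and w :: "complex^'n"
  assumes pos: "\<And>i. 0 < lam i" and w: "norm w = 1"
    and cs: "\<And>x. (inner w x)^2 \<le> inner x (B *v x)"
  defines "P \<equiv> \<Sum>i\<in>UNIV. (cmod (w$i))^2 * lam i^2"
    and "Q \<equiv> \<Sum>i\<in>UNIV. (cmod (w$i))^2 / lam i^2"
  shows "c^2*P + 2*c*d + d^2*Q \<le> spec_norm (hadamard (lam_matrix lam) B) * (c^2 + d^2)"
proof -
  define s where "s = spec_norm (hadamard (lam_matrix lam) B)"
  define y where "y = diag_mult (\<lambda>i. c * lam i + d / lam i) w"
  have lam_nz: "lam i \<noteq> 0" for i
    using pos[of i] by simp
  have t_sum: "(\<Sum>i\<in>UNIV. (cmod (w$i))^2) = 1"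
    using w by (simp flip: norm_vec_complex_sq)
  note moments = sum_moments[OF lam_nz t_sum, where c=c and d=d]
  have inner_w: "inner (diag_mult f w) (diag_mult g w) = (\<Sum>i\<in>UNIV. f i * g i * (cmod (w$i))^2)"
    for f g by (rule inner_diag_mult)
  have yy: "inner y y = c^2*P + 2*c*d + d^2*Q"
    unfolding y_def inner_w P_def Q_def by (rule moments(1))
  have wP: "inner w (diag_mult lam y) = c*P + d"
    using inner_w[of "\<lambda>i. 1"] moments(2) by (simp add: P_def y_def diag_mult_diag_mult diag_mult_one)
  have wQ: "inner w (diag_mult (\<lambda>i. 1 / lam i) y) = c + d*Q"
    using inner_w[of "\<lambda>i. 1"] moments(3) by (simp add: Q_def y_def diag_mult_diag_mult diag_mult_one)
  have "(norm (c*P + d, c + d*Q))^2 = (c*P + d)^2 + (c + d*Q)^2"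
    by (simp add: norm_Pair)
  also have "\<dots> \<le> inner (diag_mult lam y) (B *v diag_mult lam y)
      + inner (diag_mult (\<lambda>i. 1 / lam i) y) (B *v diag_mult (\<lambda>i. 1 / lam i) y)"
    using cs[of "diag_mult lam y"] cs[of "diag_mult (\<lambda>i. 1 / lam i) y"] wP wQ by simp
  also have "\<dots> = inner y (hadamard (lam_matrix lam) B *v y)"
    unfolding lam_matrix_rank_two by (rule inner_hadamard_rank_two[symmetric])
  also have "\<dots> \<le> norm y * (s * norm y)"
    unfolding s_def by (intro order_trans[OF norm_cauchy_schwarz] mult_left_mono
        norm_mult_vec_le_spec_norm norm_ge_zero)
  also have "\<dots> = s * inner (c, d) (c*P + d, c + d*Q)"
    using yy by (simp add: power2_norm_eq_inner[symmetric] power2_eq_square algebra_simps)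
  finally have "inner (c, d) (c*P + d, c + d*Q) \<le> s * (norm (c, d))^2"
    by (rule inner_le_if_norm_sq_le_inner[OF spec_norm_nonneg[of "hadamard (lam_matrix lam) B"],
          folded s_def])
  then show ?thesis
    by (simp add: s_def norm_Pair power2_eq_square algebra_simps)
qed

lemma gram_eig_le_spec_norm_hadamard:
  fixes lam :: "'n::finite \<Rightarrow> real" and B :: "complex^'n^'n"
  assumes pos: "\<And>i. 0 < lam i" and B: "psd B" "spec_norm B = 1"
  shows "\<exists>t\<in>prob_vectors. gram_eig lam t \<le> spec_norm (hadamard (lam_matrix lam) B)"
proof -
  obtain z where z: "norm z = 1" "norm (B *v z) = 1"
    using spec_norm_attained[of B] B(2) by metis
  have "inner z (B *v z) \<le> 1"
    using norm_cauchy_schwarz[of z "B *v z"] z by simp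
  then have "(inner (B *v z) x)^2 \<le> inner x (B *v x)" for x
    by (rule psd_inner_sq_le[OF B(1)])
  note bound = quadratic_form_le_spec_norm_hadamard[OF pos z(2) this]
  define t where "t i = (cmod ((B *v z)$i))^2" for i
  have "t \<in> prob_vectors"
    using z(2) by (simp add: prob_vectors_def t_def flip: norm_vec_complex_sq)
  moreover have "gram_eig lam t \<le> spec_norm (hadamard (lam_matrix lam) B)"
    unfolding gram_eig_def t_def
    by (rule top_eig_le_if_quadratic_form_le) (use bound in \<open>simp add: ac_simps\<close>)
  ultimately show ?thesis
    by blast
qed

lemma spec_norm_hadamard_rank_one_le:
  fixes lam w :: "'n::finite \<Rightarrow> real"
  assumes pos: "\<And>i. 0 < lam i" and w: "(\<Sum>i\<in>UNIV. (w i)^2) = 1"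
  shows "spec_norm (hadamard (lam_matrix lam) (rank_one w)) \<le> gram_eig lam (\<lambda>i. (w i)^2)"
proof -
  define p where "p i = lam i * w i" for i
  define q where "q i = w i / lam i" for i
  have lam_nz: "lam i \<noteq> 0" for i
    using pos[of i] by simp
  have "hadamard (lam_matrix lam) (rank_one w) = (\<chi> i j. complex_of_real (p i * p j + q i * q j))"
    by (simp add: lam_matrix_def hadamard_def rank_one_def p_def q_def vec_eq_iff field_simps lam_nz)
  moreover have "spec_norm ((\<chi> i j. complex_of_real (p i * p j + q i * q j)) :: complex^'n^'n)
      \<le> gram_eig lam (\<lambda>i. (w i)^2)"
  proof (rule spec_norm_rank_two_le)
    fix c d :: real
    have "(\<Sum>i\<in>UNIV. (c * p i + d * q i)^2)
        = (\<Sum>i\<in>UNIV. (c * lam i + d / lam i) * (c * lam i + d / lam i) * (w i)^2)"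
      unfolding p_def q_def by (rule sum.cong) (simp_all add: power2_eq_square field_simps lam_nz)
    also have "\<dots> = c^2 * (\<Sum>i\<in>UNIV. (w i)^2 * lam i^2) + 2*c*d + d^2 * (\<Sum>i\<in>UNIV. (w i)^2 / lam i^2)"
      by (rule sum_moments(1)[OF lam_nz w])
    also have "\<dots> \<le> gram_eig lam (\<lambda>i. (w i)^2) * (c^2 + d^2)"
      unfolding gram_eig_def by (rule quadratic_form_le_top_eig)
    finally show "(\<Sum>i\<in>UNIV. (c * p i + d * q i)^2) \<le> gram_eig lam (\<lambda>i. (w i)^2) * (c^2 + d^2)" .
  qed
  ultimately show ?thesis
    by simp
qed

lemma prob_vectors_nonempty: "prob_vectors \<noteq> {}"
proof -
  have "(\<lambda>_. 1 / real CARD('n)) \<in> (prob_vectors :: ('n::finite \<Rightarrow> real) set)"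
    by (simp add: prob_vectors_def)
  then show ?thesis
    by blast
qed

lemma I_sp_lam_matrix:
  fixes lam :: "'n::finite \<Rightarrow> real"
  assumes pos: "\<And>i. 0 < lam i"
  shows "I_sp (lam_matrix lam) = (INF t\<in>prob_vectors. gram_eig lam t)"
proof -
  define W where "W = {spec_norm (hadamard (lam_matrix lam) B) | B. psd B \<and> spec_norm B = 1}"
  let ?G = "gram_eig lam ` prob_vectors"
  have W_below: "\<exists>v\<in>W. v \<le> g" if "g \<in> ?G" for g
  proof -
    obtain t where t: "t \<in> prob_vectors" and g: "g = gram_eig lam t"
      using \<open>g \<in> ?G\<close> by blast
    define w where "w i = sqrt (t i)" for i
    have w_sq: "(\<lambda>i. (w i)^2) = t"
      using t by (simp add: w_def prob_vectors_def fun_eq_iff)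
    have w: "(\<Sum>i\<in>UNIV. (w i)^2) = 1"
      unfolding w_sq using t by (simp add: prob_vectors_def)
    have "spec_norm (hadamard (lam_matrix lam) (rank_one w)) \<in> W"
      unfolding W_def using psd_rank_one spec_norm_rank_one[OF w] by blast
    moreover have "spec_norm (hadamard (lam_matrix lam) (rank_one w)) \<le> g"
      using spec_norm_hadamard_rank_one_le[OF pos w] unfolding g w_sq .
    ultimately show ?thesis
      by blast
  qed
  have G_below: "\<exists>g\<in>?G. g \<le> v" if "v \<in> W" for v
    using that gram_eig_le_spec_norm_hadamard[of lam, OF pos] unfolding W_def by blast
  have "Inf W \<le> Inf ?G"
    using prob_vectors_nonempty W_below
    by (intro cInf_mono) (auto simp: W_def intro!: bdd_belowI[of _ 0] spec_norm_nonneg)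
  moreover have "Inf ?G \<le> Inf W"
    using prob_vectors_nonempty W_below G_below
    by (intro cInf_mono) (auto intro!: bdd_belowI[of _ 0] gram_eig_nonneg)
  ultimately show ?thesis
    unfolding I_sp_def W_def by (rule antisym)
qed

section \<open>Minimization over probability vectors\<close>

lemma inverse_ge_chord:
  fixes a b z :: real
  assumes "0 < a" "0 < b" "0 < z" and "0 \<le> (z - a) * (z - b)"
  shows "1/a + 1/b - z/(a*b) \<le> 1/z"
proof -
  have "(b + a - z) * z \<le> a * b"
    using assms(4) by (simp add: algebra_simps power2_eq_square)
  then have "(b + a - z) / (a * b) \<le> 1/z"
    using assms(1-3) by (simp add: divide_simps mult.commute)
  moreover have "1/a + 1/b - z/(a*b) = (b + a - z) / (a * b)"
    using assms(1,2) by (simp add: field_simps)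
  ultimately show ?thesis
    by simp
qed

lemma weighted_mean_bracketed:
  fixes f :: "'n::finite \<Rightarrow> real"
  assumes t: "t \<in> prob_vectors"
  obtains j k where "f j \<le> (\<Sum>i\<in>UNIV. t i * f i)" and "(\<Sum>i\<in>UNIV. t i * f i) \<le> f k"
    and "\<And>i. 0 \<le> (f i - f j) * (f i - f k)"
proof -
  define P where "P = (\<Sum>i\<in>UNIV. t i * f i)"
  have t_nonneg: "0 \<le> t i" and t_sum: "(\<Sum>i\<in>UNIV. t i) = 1" for i
    using t by (auto simp: prob_vectors_def)
  have "(\<Sum>i\<in>UNIV. t i * Min (range f)) \<le> P"
    unfolding P_def by (intro sum_mono mult_left_mono t_nonneg) simp
  then have "Min (range f) \<le> P"
    unfolding sum_distrib_right[symmetric] t_sum by simp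
  with Min_in[of "range f"] have below: "{i. f i \<le> P} \<noteq> {}"
    by (auto simp del: Min_in)
  have "P \<le> (\<Sum>i\<in>UNIV. t i * Max (range f))"
    unfolding P_def by (intro sum_mono mult_left_mono t_nonneg) simp
  then have "P \<le> Max (range f)"
    unfolding sum_distrib_right[symmetric] t_sum by simp
  with Max_in[of "range f"] have above: "{i. P \<le> f i} \<noteq> {}"
    by (auto simp del: Max_in)
  have "Max (f ` {i. f i \<le> P}) \<in> f ` {i. f i \<le> P}"
    using below by (intro Max_in) auto
  then obtain j where j: "Max (f ` {i. f i \<le> P}) = f j" and jP: "f j \<le> P"
    by (rule imageE) simp
  have "Min (f ` {i. P \<le> f i}) \<in> f ` {i. P \<le> f i}"
    using above by (intro Min_in) auto
  then obtain k where k: "Min (f ` {i. P \<le> f i}) = f k" and Pk: "P \<le> f k"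
    by (rule imageE) simp
  have "0 \<le> (f i - f j) * (f i - f k)" for i
  proof (cases "f i \<le> P")
    case True
    then have "f i \<le> f j"
      unfolding j[symmetric] by (intro Max_ge) auto
    then show ?thesis
      using Pk True by (intro mult_nonpos_nonpos) auto
  next
    case False
    then have "f k \<le> f i"
      unfolding k[symmetric] by (intro Min_le) auto
    then show ?thesis
      using jP False by (intro mult_nonneg_nonneg) auto
  qed
  with that jP Pk show ?thesis
    unfolding P_def by blast
qed

text \<open>The point (\<Sum> t f, \<Sum> t / f) lies above the chord of the convex function 1/x between two
  values of f bracketing the mean \<Sum> t f.\<close>
lemma weighted_mean_above_chord:
  fixes f :: "'n::finite \<Rightarrow> real"
  assumes t: "t \<in> prob_vectors" and f: "\<And>i. 0 < f i"
  obtains j k where "f j \<le> (\<Sum>i\<in>UNIV. t i * f i)" and "(\<Sum>i\<in>UNIV. t i * f i) \<le> f k"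
    and "1/f j + 1/f k - (\<Sum>i\<in>UNIV. t i * f i) / (f j * f k) \<le> (\<Sum>i\<in>UNIV. t i / f i)"
proof -
  obtain j k where jk: "f j \<le> (\<Sum>i\<in>UNIV. t i * f i)" "(\<Sum>i\<in>UNIV. t i * f i) \<le> f k"
    and sign: "\<And>i. 0 \<le> (f i - f j) * (f i - f k)"
    using weighted_mean_bracketed[OF t, where f = f] by blast
  have t_nonneg: "0 \<le> t i" and t_sum: "(\<Sum>i\<in>UNIV. t i) = 1" for i
    using t by (auto simp: prob_vectors_def)
  have "t i * (1/f j + 1/f k - f i/(f j * f k)) \<le> t i / f i" for i
    using mult_left_mono[OF inverse_ge_chord[OF f f f sign] t_nonneg] by simp
  then have "(\<Sum>i\<in>UNIV. t i * (1/f j + 1/f k - f i/(f j * f k))) \<le> (\<Sum>i\<in>UNIV. t i / f i)"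
    by (rule sum_mono)
  moreover have "(\<Sum>i\<in>UNIV. t i * (1/f j + 1/f k - f i/(f j * f k)))
      = 1/f j + 1/f k - (\<Sum>i\<in>UNIV. t i * f i) / (f j * f k)"
    by (simp add: right_diff_distrib sum_subtractf sum_divide_distrib
        flip: sum_distrib_right add: t_sum)
  ultimately show ?thesis
    using that jk by simp
qed

lemma le_top_eig_if_quadratic_form_ge:
  assumes "0 < c^2 + d^2" and "m * (c^2 + d^2) \<le> c^2*P + 2*c*d + d^2*Q"
  shows "m \<le> top_eig P Q"
  using assms order_trans[OF assms(2) quadratic_form_le_top_eig] by simp

text \<open>Evaluate the quadratic form of [[P, 1], [1, Q]] at (y^2, 1).\<close>
lemma top_eig_ge_at_endpoint:
  fixes x y P Q m :: real
  assumes x: "0 < x" and y: "0 < y"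
    and chord: "1/x^2 + 1/y^2 - P/(x^2*y^2) \<le> Q"
    and sign: "0 \<le> (y^2 - 1/(x*y)) * (P - y^2)"
    and m: "m \<le> y^2 + 1/y^2"
  shows "m \<le> top_eig P Q"
proof (rule le_top_eig_if_quadratic_form_ge)
  show "0 < (y^2)^2 + 1^2"
    by (intro add_nonneg_pos) simp_all
  have "0 \<le> (y^2 - 1/(x*y)) * (P - y^2) * (y^2 + 1/(x*y))"
    using sign x y by simp
  also have "\<dots> = (y^2)^2*P + 2*y^2 + (1/x^2 + 1/y^2 - P/(x^2*y^2)) - (y^2 + 1/y^2) * ((y^2)^2 + 1^2)"
    using x y by (simp add: field_simps power2_eq_square)
  finally have "(y^2 + 1/y^2) * ((y^2)^2 + 1^2) \<le> (y^2)^2*P + 2*y^2*1 + 1^2*Q"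
    using chord by simp
  moreover have "m * ((y^2)^2 + 1^2) \<le> (y^2 + 1/y^2) * ((y^2)^2 + 1^2)"
    using m by (intro mult_right_mono) simp_all
  ultimately show "m * ((y^2)^2 + 1^2) \<le> (y^2)^2*P + 2*y^2*1 + 1^2*Q"
    by linarith
qed

text \<open>Evaluate the quadratic form of [[P, 1], [1, Q]] at (1, x y).\<close>
lemma top_eig_ge_at_interior:
  fixes x y P Q m :: real
  assumes x: "0 < x" and y: "0 < y"
    and chord: "1/x^2 + 1/y^2 - P/(x^2*y^2) \<le> Q"
    and m: "m \<le> (x + y)^2 / (1 + x^2*y^2)"
  shows "m \<le> top_eig P Q"
proof (rule le_top_eig_if_quadratic_form_ge)
  show pos: "0 < 1^2 + (x*y)^2"
    by (simp add: add_pos_nonneg)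
  have "(x*y)^2 * (1/x^2 + 1/y^2 - P/(x^2*y^2)) \<le> (x*y)^2 * Q"
    using chord by (intro mult_left_mono) simp_all
  moreover have "(x*y)^2 * (1/x^2 + 1/y^2 - P/(x^2*y^2)) = y^2 + x^2 - P"
    using x y by (simp add: field_simps power2_eq_square)
  moreover have "m * (1^2 + (x*y)^2) \<le> (x + y)^2"
    using m pos by (simp add: pos_le_divide_eq power_mult_distrib)
  ultimately show "m * (1^2 + (x*y)^2) \<le> 1^2*P + 2*1*(x*y) + (x*y)^2*Q"
    by (simp add: power2_eq_square algebra_simps)
qed

lemma less_one_less_if_inverse_between:
  fixes x y :: real
  assumes x: "0 < x" and xy: "x \<le> y" and between: "x^2 < 1/(x*y)" "1/(x*y) < y^2"
  shows "x < 1 \<and> 1 < y"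
proof (intro conjI; rule ccontr)
  assume "\<not> x < 1"
  then have "1 \<le> x * y" and "1 \<le> x^2"
    using x xy by (simp_all add: one_le_power mult_ge1_I)
  then have "1/(x*y) \<le> 1"
    using x by simp
  then show False
    using between \<open>1 \<le> x^2\<close> by linarith
next
  assume "\<not> 1 < y"
  then have "x * y \<le> 1" and "y^2 \<le> 1"
    using x xy by (simp_all add: power_le_one mult_le_one)
  then have "1 \<le> 1/(x*y)"
    using x xy by simp
  then show False
    using between \<open>y^2 \<le> 1\<close> by linarith
qed

lemma top_eig_ge_above_chord:
  fixes x y P Q m :: real
  assumes x: "0 < x" and y: "0 < y" and xP: "x^2 \<le> P" and Py: "P \<le> y^2"
    and chord: "1/x^2 + 1/y^2 - P/(x^2*y^2) \<le> Q"
    and mx: "m \<le> x^2 + 1/x^2" and my: "m \<le> y^2 + 1/y^2"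
    and mxy: "x < 1 \<Longrightarrow> 1 < y \<Longrightarrow> x^2 \<le> 1/(x*y) \<Longrightarrow> 1/(x*y) \<le> y^2 \<Longrightarrow>
      m \<le> (x + y)^2 / (1 + x^2*y^2)"
  shows "m \<le> top_eig P Q"
proof -
  have xy: "x \<le> y"
    using power2_le_imp_le[OF order_trans[OF xP Py]] y by simp
  consider "y^2 \<le> 1/(x*y)" | "1/(x*y) \<le> x^2" | "x^2 < 1/(x*y)" "1/(x*y) < y^2"
    by (meson not_le)
  then show ?thesis
  proof cases
    case 1
    have "0 \<le> (y^2 - 1/(x*y)) * (P - y^2)"
      using 1 Py by (intro mult_nonpos_nonpos) simp_all
    then show ?thesis
      by (rule top_eig_ge_at_endpoint[OF x y chord _ my])
  next
    case 2
    have "1/y^2 + 1/x^2 - P/(y^2*x^2) \<le> Q"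
      using chord by (simp add: ac_simps)
    moreover have "0 \<le> (x^2 - 1/(y*x)) * (P - x^2)"
      using 2 xP by (intro mult_nonneg_nonneg) (simp_all add: ac_simps)
    ultimately show ?thesis
      by (rule top_eig_ge_at_endpoint[OF y x _ _ mx])
  next
    case 3
    then have "x < 1" "1 < y"
      using less_one_less_if_inverse_between[OF x xy] by auto
    then show ?thesis
      using 3 by (intro top_eig_ge_at_interior[OF x y chord] mxy) auto
  qed
qed

lemma gram_eig_ge:
  fixes lam :: "'n::finite \<Rightarrow> real"
  assumes pos: "\<And>i. 0 < lam i" and t: "t \<in> prob_vectors"
    and vertex: "\<And>i. m \<le> lam i^2 + 1/lam i^2"
    and pair: "\<And>i j. lam i < 1 \<Longrightarrow> 1 < lam j \<Longrightarrow> lam i^2 \<le> 1/(lam i * lam j) \<Longrightarrow>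
      1/(lam i * lam j) \<le> lam j^2 \<Longrightarrow> m \<le> (lam i + lam j)^2 / (1 + lam i^2 * lam j^2)"
  shows "m \<le> gram_eig lam t"
proof -
  have sq_pos: "0 < lam i^2" for i
    using pos[of i] by simp
  obtain j k where "lam j^2 \<le> (\<Sum>i\<in>UNIV. t i * lam i^2)" "(\<Sum>i\<in>UNIV. t i * lam i^2) \<le> lam k^2"
    and "1/lam j^2 + 1/lam k^2 - (\<Sum>i\<in>UNIV. t i * lam i^2) / (lam j^2 * lam k^2)
      \<le> (\<Sum>i\<in>UNIV. t i / lam i^2)"
    by (rule weighted_mean_above_chord[OF t sq_pos])
  then show ?thesis
    unfolding gram_eig_def
    by (intro top_eig_ge_above_chord[OF pos pos] vertex pair) (auto simp: power_mult_distrib)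
qed

text \<open>The weight t is chosen so that V - P = x y for V = (x + y)^2 / (1 + x^2 y^2); then also
  V - Q = 1 / (x y), so V is exactly the top eigenvalue.\<close>
lemma top_eig_two_point_le:
  fixes x y :: real
  assumes x: "0 < x" and xy: "x < y" and h1: "x^3*y \<le> 1" and h2: "1 \<le> x*y^3"
  defines "t \<equiv> x*(x*y^3 - 1) / ((y - x)*(1 + x^2*y^2))"
  shows "0 \<le> t" and "t \<le> 1"
    and "top_eig (t*x^2 + (1-t)*y^2) (t/x^2 + (1-t)/y^2) \<le> (x + y)^2 / (1 + x^2*y^2)"
proof -
  define E where "E = 1 + x^2*y^2"
  define D where "D = (y - x) * E"
  define V where "V = (x + y)^2 / E"
  have E: "0 < E"
    unfolding E_def by (simp add: add_pos_nonneg)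
  have D: "0 < D"
    unfolding D_def using E xy by simp
  have y: "0 < y"
    using x xy by simp
  have "t = x*(x*y^3 - 1) / D"
    unfolding t_def D_def E_def ..
  then have tD: "t * D = x*(x*y^3 - 1)"
    using D by simp
  have t1D: "(1 - t) * D = y*(1 - x^3*y)"
    using tD by (simp add: D_def E_def algebra_simps power2_eq_square power3_eq_cube)
  have "0 \<le> t * D"
    unfolding tD using h2 x by simp
  then show "0 \<le> t"
    using D by (simp add: zero_le_mult_iff)
  have "0 \<le> (1 - t) * D"
    unfolding t1D using h1 y by simp
  then show "t \<le> 1"
    using D by (simp add: zero_le_mult_iff)
  have VD: "V * D = (y - x) * (x + y)^2"
    using E by (simp add: V_def D_def)
  have "(V - (t*x^2 + (1-t)*y^2)) * D = V*D - (t*D)*x^2 - ((1-t)*D)*y^2"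
    by (simp add: algebra_simps)
  also have "\<dots> = (x*y) * D"
    unfolding VD tD t1D by (simp add: D_def E_def algebra_simps power2_eq_square power3_eq_cube)
  finally have VP: "V - (t*x^2 + (1-t)*y^2) = x*y"
    using D by simp
  have "(V - (t/x^2 + (1-t)/y^2)) * (D * (x*y)) = V*D*(x*y) - (t*D)*(y/x) - ((1-t)*D)*(x/y)"
    using x y by (simp add: field_simps power2_eq_square)
  also have "\<dots> = D"
    unfolding VD tD t1D using x y
    by (simp add: D_def E_def field_simps power2_eq_square power3_eq_cube)
  finally have "V - (t/x^2 + (1-t)/y^2) = D / (D * (x*y))"
    using D x y by (simp add: eq_divide_eq)
  then have VQ: "V - (t/x^2 + (1-t)/y^2) = 1/(x*y)"
    using D by simp
  show "top_eig (t*x^2 + (1-t)*y^2) (t/x^2 + (1-t)/y^2) \<le> (x + y)^2 / (1 + x^2*y^2)"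
    unfolding top_eig_le_iff V_def[unfolded E_def, symmetric]
    using VP VQ x y by (simp add: algebra_simps)
qed

lemma gram_eig_unit_le:
  assumes "0 < lam i"
  shows "\<exists>t\<in>prob_vectors. gram_eig lam t \<le> lam i^2 + 1/lam i^2"
proof
  let ?t = "\<lambda>k. if k = i then 1 else 0 :: real"
  show "?t \<in> prob_vectors"
    by (simp add: prob_vectors_def)
  have "gram_eig lam ?t = top_eig (lam i^2) (1/lam i^2)"
    by (simp add: gram_eig_def if_distrib[of "\<lambda>x. x * _"] if_distrib[of "\<lambda>x. x / _"] cong: if_cong)
  also have "\<dots> \<le> lam i^2 + 1/lam i^2"
    using assms by (simp add: top_eig_le_iff)
  finally show "gram_eig lam ?t \<le> lam i^2 + 1/lam i^2" .
qed

lemma gram_eig_two_point_le: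
  fixes lam :: "'n::finite \<Rightarrow> real"
  assumes pos: "\<And>k. 0 < lam k"
    and "lam i < 1" and "1 < lam j" and "lam i^2 \<le> 1/(lam i * lam j)" and "1/(lam i * lam j) \<le> lam j^2"
  shows "\<exists>t\<in>prob_vectors. gram_eig lam t \<le> (lam i + lam j)^2 / (1 + lam i^2 * lam j^2)"
proof -
  let ?x = "lam i" and ?y = "lam j"
  have ij: "i \<noteq> j" and xy: "?x < ?y"
    using assms(2,3) by auto
  have xy_pos: "0 < ?x * ?y"
    using pos by simp
  have "?x^3 * ?y \<le> 1"
    using assms(4) xy_pos by (simp add: pos_le_divide_eq power2_eq_square power3_eq_cube ac_simps)
  moreover have "1 \<le> ?x * ?y^3"
    using assms(5) xy_pos by (simp add: pos_divide_le_eq power2_eq_square power3_eq_cube ac_simps)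
  ultimately obtain s where s: "0 \<le> s" "s \<le> 1"
    and top: "top_eig (s*?x^2 + (1-s)*?y^2) (s/?x^2 + (1-s)/?y^2) \<le> (?x + ?y)^2 / (1 + ?x^2*?y^2)"
    using top_eig_two_point_le[OF pos xy] by blast
  let ?t = "\<lambda>k. if k = i then s else if k = j then 1 - s else 0"
  show ?thesis
  proof
    show "?t \<in> prob_vectors"
      using s ij by (simp add: prob_vectors_def sum.If_cases Int_absorb1)
    show "gram_eig lam ?t \<le> (?x + ?y)^2 / (1 + ?x^2*?y^2)"
      using top ij unfolding gram_eig_def
      by (simp add: if_distrib[of "\<lambda>x. x * _"] if_distrib[of "\<lambda>x. x / _"] sum.If_cases
          Int_absorb1 cong: if_cong)
  qed
qed

lemma finite_indexed_values:
  fixes f :: "'n::finite \<Rightarrow> 'a" and g :: "'n \<Rightarrow> 'n \<Rightarrow> 'a"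
  shows "finite {f i | i. P i}" and "finite {g i j | i j. Q i j}"
proof -
  have "{f i | i. P i} \<subseteq> range f"
    by auto
  then show "finite {f i | i. P i}"
    by (rule finite_subset) simp
  have "{g i j | i j. Q i j} \<subseteq> (\<lambda>(i, j). g i j) ` UNIV"
    by auto
  then show "finite {g i j | i j. Q i j}"
    by (rule finite_subset) simp
qed

lemma INF_gram_eig:
  fixes lam :: "'n::finite \<Rightarrow> real"
  assumes pos: "\<And>i. 0 < lam i"
  shows "(INF t\<in>prob_vectors. gram_eig lam t) = Min ({lam i^2 + 1/lam i^2 | i. True} \<union>
    {(lam i + lam j)^2 / (1 + lam i^2 * lam j^2) | i j. lam i < 1 \<and> 1 < lam j \<and>
      lam i^2 \<le> 1/(lam i * lam j) \<and> 1/(lam i * lam j) \<le> lam j^2})"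
    (is "_ = Min (?V \<union> ?S)")
proof -
  have V: "finite ?V" "?V \<noteq> {}" and S: "finite ?S"
    by (rule finite_indexed_values, blast, rule finite_indexed_values)
  have lower: "Min (?V \<union> ?S) \<le> gram_eig lam t" if "t \<in> prob_vectors" for t
    using pos that by (rule gram_eig_ge) (use V S in \<open>auto intro: Min_le\<close>)
  have "Min (?V \<union> ?S) \<in> ?V \<union> ?S"
    using V S by (intro Min_in) auto
  then have "\<exists>t\<in>prob_vectors. gram_eig lam t \<le> Min (?V \<union> ?S)"
  proof
    assume "Min (?V \<union> ?S) \<in> ?V"
    then obtain i where "Min (?V \<union> ?S) = lam i^2 + 1/lam i^2"
      by blast
    then show ?thesis
      using gram_eig_unit_le[of lam i] pos by simp
  next
    assume "Min (?V \<union> ?S) \<in> ?S"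
    then obtain i j where "Min (?V \<union> ?S) = (lam i + lam j)^2 / (1 + lam i^2 * lam j^2)"
      and "lam i < 1" "1 < lam j" "lam i^2 \<le> 1/(lam i * lam j)" "1/(lam i * lam j) \<le> lam j^2"
      by blast
    then show ?thesis
      using gram_eig_two_point_le[of lam i j, OF pos] by simp
  qed
  then obtain t where "t \<in> prob_vectors" "gram_eig lam t \<le> Min (?V \<union> ?S)"
    by blast
  then show ?thesis
    using lower prob_vectors_nonempty
    by (intro antisym cInf_lower2[of "gram_eig lam t"] cInf_greatest) (auto intro!: bdd_belowI)
qed

theorem mainTheorem14:
  fixes lam :: "'n::finite \<Rightarrow> real"
  assumes pos: "\<And>i. lam i > 0"
  defines "Lam \<equiv> (\<chi> i j. complex_of_real (lam i * lam j + 1 / (lam i * lam j))) :: complex^'n^'n"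
      and "M1 \<equiv> Min {lam i ^ 2 + 1 / lam i ^ 2 | i. True}"
      and "S \<equiv> {(lam i + lam j)^2 / (1 + lam i ^ 2 * lam j ^ 2) | i j.
                 lam i < 1 \<and> 1 < lam j \<and> lam i ^ 2 \<le> 1 / (lam i * lam j)
                 \<and> 1 / (lam i * lam j) \<le> lam j ^ 2}"
  shows "I_sp Lam = (if S = {} then M1 else min M1 (Inf S)) \<and>
         (((\<forall>i. lam i \<ge> 1) \<or> (\<forall>i. lam i \<le> 1)) \<longrightarrow> I_sp Lam = M1)"
proof -
  let ?V = "{lam i ^ 2 + 1 / lam i ^ 2 | i. True}"
  have V: "finite ?V" "?V \<noteq> {}" and "finite S"
    unfolding S_def by (rule finite_indexed_values, blast, rule finite_indexed_values)
  have "Lam = lam_matrix lam"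
    unfolding Lam_def lam_matrix_def ..
  then have "I_sp Lam = Min (?V \<union> S)"
    unfolding S_def using I_sp_lam_matrix[of lam, OF pos] INF_gram_eig[of lam, OF pos] by simp
  also have "\<dots> = (if S = {} then M1 else min M1 (Inf S))"
    using V \<open>finite S\<close> by (simp add: M1_def Min_Un cInf_eq_Min)
  finally have "I_sp Lam = (if S = {} then M1 else min M1 (Inf S))" .
  moreover have "(\<forall>i. 1 \<le> lam i) \<or> (\<forall>i. lam i \<le> 1) \<Longrightarrow> S = {}"
    unfolding S_def by (auto simp: not_le[symmetric])
  ultimately show ?thesis
    by auto
qed

end
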